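(* Let $S$ be a finite set, $X\subseteq S$ and $x\in X$, and let $\mathcal{P}=\{X,X\setminus\{x\}\}$. Then $\mathcal{P}\in\bullet(\{2^Y\mid\emptyset\subsetneq Y\subseteq X\})$.
   Context: Here $2^Y=\{W\subseteq S\mid W\subseteq Y\}$ (note that $2^\emptyset=\{\emptyset\}$ is excluded from the generating family). For sets $A,B$, $A\,\dot\cup\,B=A\cup B$ is defined only when $A\cap B=\emptyset$, and $A\,\dot\setminus\,B=A\setminus B$ is defined only when $B\subseteq A$. For a finite family $\mathcal{G}$ of sets, $\bullet(\mathcal{G})$ is the smallest family of sets containing $\emptyset$ and every member of $\mathcal{G}$ and closed under all well-defined disjoint unions and subset complements. *)

theory Defs
  imports Main
begin

definition powS :: "'a set \<Rightarrow> 'a set \<Rightarrow> 'a set set" where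
  "powS S Y = {W. W \<subseteq> S \<and> W \<subseteq> Y}"

inductive_set dclosure :: "'b set set \<Rightarrow> 'b set set" for G :: "'b set set" where
  empty: "{} \<in> dclosure G"
| gen: "A \<in> G \<Longrightarrow> A \<in> dclosure G"
| dunion: "A \<in> dclosure G \<Longrightarrow> B \<in> dclosure G \<Longrightarrow> A \<inter> B = {} \<Longrightarrow> A \<union> B \<in> dclosure G"
| dminus: "A \<in> dclosure G \<Longrightarrow> B \<in> dclosure G \<Longrightarrow> B \<subseteq> A \<Longrightarrow> A - B \<in> dclosure G"

end

theory Submission
  imports Defs
begin

text \<open>The intervals \<open>{W. A \<subseteq> W \<and> W \<subseteq> B}\<close> with \<open>A\<close> finite and \<open>A \<subset> B\<close> are
generated by subset complements, by induction on \<open>A\<close>: for \<open>A = {}\<close> the interval is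
\<open>2\<^sup>B\<close>, and enlarging the lower end by \<open>a\<close> amounts to subtracting the interval
\<open>[A, B - {a}]\<close> from \<open>[A, B]\<close>. The pair \<open>{X, X - {x}}\<close> is the interval \<open>[X - {x}, X]\<close>.\<close>

lemma powS_eq_interval_empty:
  assumes "B \<subseteq> S"
  shows "powS S B = {W. {} \<subseteq> W \<and> W \<subseteq> B}"
  using assms by (auto simp: powS_def)

lemma interval_insert_eq_diff:
  "{W. insert a A \<subseteq> W \<and> W \<subseteq> B} = {W. A \<subseteq> W \<and> W \<subseteq> B} - {W. A \<subseteq> W \<and> W \<subseteq> B - {a}}"
  by auto

lemma interval_in_dclosure:
  assumes "finite A" and "A \<subset> B" and "B \<subseteq> S"
    and gen: "\<And>Y. Y \<noteq> {} \<Longrightarrow> Y \<subseteq> B \<Longrightarrow> powS S Y \<in> G"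
  shows "{W. A \<subseteq> W \<and> W \<subseteq> B} \<in> dclosure G"
  using assms
proof (induction A arbitrary: B rule: finite_induct)
  case empty
  then have "powS S B \<in> G" by blast
  then show ?case
    using powS_eq_interval_empty[OF empty.prems(2)] by (simp add: dclosure.gen)
next
  case (insert a A)
  have upper: "{W. A \<subseteq> W \<and> W \<subseteq> B} \<in> dclosure G"
    using insert.prems by (intro insert.IH) auto
  have lower: "{W. A \<subseteq> W \<and> W \<subseteq> B - {a}} \<in> dclosure G"
    using insert.prems insert.hyps(2) by (intro insert.IH) auto
  have "{W. A \<subseteq> W \<and> W \<subseteq> B} - {W. A \<subseteq> W \<and> W \<subseteq> B - {a}} \<in> dclosure G"
    using dclosure.dminus[OF upper lower] by auto
  then show ?case
    by (simp only: interval_insert_eq_diff)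
qed

theorem lemma6p11:
  fixes S X :: "'a set" and x :: 'a
  assumes "finite S" and "X \<subseteq> S" and "x \<in> X"
  shows "{X, X - {x}} \<in> dclosure {powS S Y | Y. {} \<subset> Y \<and> Y \<subseteq> X}"
proof -
  have "finite (X - {x})"
    using assms(1,2) finite_subset by blast
  moreover have "X - {x} \<subset> X"
    using assms(3) by blast
  ultimately have "{W. X - {x} \<subseteq> W \<and> W \<subseteq> X} \<in> dclosure {powS S Y | Y. {} \<subset> Y \<and> Y \<subseteq> X}"
    using assms(2) by (rule interval_in_dclosure) blast
  moreover have "{W. X - {x} \<subseteq> W \<and> W \<subseteq> X} = {X, X - {x}}"
    using assms(3) by auto
  ultimately show ?thesis
    by simp
qed

end
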